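(* Let $M$ be a connected, oriented, complete hyperbolic three-manifold with universal cover $\tilde M\cong\mathbb{H}^3$, let $\omega$ be a closed one-form on $M$ with lift $\tilde\omega$ to $\tilde M$, and let $b\in\tilde M$. Let $D$ be an ideal view, i.e. the set of outward unit normals to a horosphere $H\subset\tilde M$ (pointing away from the ideal centre of $H$). Identify $H=\pi(D)$ isometrically with $\mathbb{C}$ and write $z_D\in D$ for the normal vector based at the point corresponding to $z\in\mathbb{C}$. Let $d$ be a real number and let $E=\varphi_d(D)$ (again an ideal view), with $\pi(E)$ identified isometrically with $\mathbb{C}$ so that $\varphi_d(z_D)=(e^dz)_E$ for all $z\in\mathbb{C}$. Then for every $R>0$ and every $z\in\mathbb{C}$, \[\Phi^{\omega,b,D}_{R+d}(z_D)=\Phi^{\omega,b,E}_R\big((e^dz)_E\big).\]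
   Context: $\pi\colon \mathrm{UT}\tilde M\to\tilde M$ is the unit tangent bundle projection and $\varphi_t$ is the geodesic flow on $\mathrm{UT}\tilde M$. For a view $D\subset\mathrm{UT}\tilde M$, basepoint $b\in\tilde M$ and $T>0$, the cohomology fractal is $\Phi^{\omega,b,D}_T\colon D\to\mathbb{R}$, $\Phi^{\omega,b,D}_T(v)=\int_0^T\tilde\omega(\varphi_t(v))\,dt+\int_b^{\pi(v)}\tilde\omega$, where a one-form is evaluated on a unit vector $v$ at its basepoint, and the second integral is along any path in $\tilde M$ (well defined since $\tilde\omega$ is closed on the simply connected $\tilde M$). Equivalently $\Phi^{\omega,b,D}_T(v)=W(\pi(\varphi_T(v)))$ where $dW=\tilde\omega$ and $W(b)=0$. *)

theory Defs
  imports "HOL-Analysis.Analysis"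
begin

text \<open>Hyperboloid model of hyperbolic 3-space inside Minkowski space R^(1,3).
  Coordinate 1 is the time coordinate.\<close>

definition mink :: "real^4 \<Rightarrow> real^4 \<Rightarrow> real" where
  "mink x y = - x$1 * y$1 + x$2 * y$2 + x$3 * y$3 + x$4 * y$4"

definition H3 :: "(real^4) set" where
  "H3 = {p. mink p p = -1 \<and> p$1 > 0}"

definition UT :: "((real^4) \<times> (real^4)) set" where
  "UT = {(p, v). p \<in> H3 \<and> mink p v = 0 \<and> mink v v = 1}"

definition gflow :: "real \<Rightarrow> (real^4) \<times> (real^4) \<Rightarrow> (real^4) \<times> (real^4)" where
  "gflow t u = (cosh t *\<^sub>R fst u + sinh t *\<^sub>R snd u, sinh t *\<^sub>R fst u + cosh t *\<^sub>R snd u)"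

definition chart :: "real^3 \<Rightarrow> real^4" where
  "chart x = vector [sqrt (1 + (norm x)\<^sup>2), x$1, x$2, x$3]"

text \<open>A one-form on H3 is represented by  w :: real^4 => real^4 => real, where  w p  is
  (a linear extension of) the covector at p.  It is closed if its pullback along the
  global chart has C^1 coefficients with symmetric Jacobian, i.e. d w = 0.\<close>
definition pullback_coeffs :: "(real^4 \<Rightarrow> real^4 \<Rightarrow> real) \<Rightarrow> real^3 \<Rightarrow> real^3" where
  "pullback_coeffs w x = (\<chi> i. w (chart x) (frechet_derivative chart (at x) (axis i 1)))"

definition closed_one_form :: "(real^4 \<Rightarrow> real^4 \<Rightarrow> real) \<Rightarrow> bool" where
  "closed_one_form w \<longleftrightarrow>
     (\<forall>p\<in>H3. linear (w p)) \<and>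
     (\<exists>D. (\<forall>x. (pullback_coeffs w has_derivative D x) (at x)) \<and>
          (\<forall>i j. continuous_on UNIV (\<lambda>x. D x (axis j 1) $ i)) \<and>
          (\<forall>x i j. D x (axis j 1) $ i = D x (axis i 1) $ j))"

definition line_int :: "(real^4 \<Rightarrow> real^4 \<Rightarrow> real) \<Rightarrow> (real \<Rightarrow> real^4) \<Rightarrow> real" where
  "line_int w \<gamma> = integral {0..1} (\<lambda>t. w (\<gamma> t) (vector_derivative \<gamma> (at t within {0..1})))"

definition C1_path_in :: "(real^4) set \<Rightarrow> real^4 \<Rightarrow> real^4 \<Rightarrow> (real \<Rightarrow> real^4) \<Rightarrow> bool" where
  "C1_path_in S p q \<gamma> \<longleftrightarrow> \<gamma> C1_differentiable_on {0..1} \<and> \<gamma> ` {0..1} \<subseteq> S \<and> \<gamma> 0 = p \<and> \<gamma> 1 = q"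

text \<open>Integral of w from b to p along (any) C^1 path in H3.\<close>
definition int_from :: "(real^4 \<Rightarrow> real^4 \<Rightarrow> real) \<Rightarrow> real^4 \<Rightarrow> real^4 \<Rightarrow> real" where
  "int_from w b p = line_int w (SOME \<gamma>. C1_path_in H3 b p \<gamma>)"

definition sint :: "(real \<Rightarrow> real) \<Rightarrow> real \<Rightarrow> real" where
  "sint f T = (if 0 \<le> T then integral {0..T} f else - integral {T..0} f)"

definition Phi :: "(real^4 \<Rightarrow> real^4 \<Rightarrow> real) \<Rightarrow> real^4 \<Rightarrow> real \<Rightarrow> (real^4) \<times> (real^4) \<Rightarrow> real" where
  "Phi w b T v = sint (\<lambda>t. w (fst (gflow t v)) (snd (gflow t v))) T + int_from w b (fst v)"

text \<open>Horospheres: level sets {p in H3. <p,l> = -c} with l future light-like, c > 0;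
  the ideal centre is the ray of l.\<close>
definition lightlike_future :: "real^4 \<Rightarrow> bool" where
  "lightlike_future l \<longleftrightarrow> mink l l = 0 \<and> l$1 > 0"

definition horosphere :: "real^4 \<Rightarrow> real \<Rightarrow> (real^4) set" where
  "horosphere l c = {p \<in> H3. mink p l = - c}"

text \<open>Unit normal at p pointing away from the ideal centre l.\<close>
definition out_normal :: "real^4 \<Rightarrow> real^4 \<Rightarrow> real^4" where
  "out_normal l p = p + (1 / mink p l) *\<^sub>R l"

definition ideal_view_of :: "real^4 \<Rightarrow> real \<Rightarrow> ((real^4) \<times> (real^4)) set" where
  "ideal_view_of l c = (\<lambda>p. (p, out_normal l p)) ` horosphere l c"

definition ideal_view :: "((real^4) \<times> (real^4)) set \<Rightarrow> bool" where
  "ideal_view D \<longleftrightarrow> (\<exists>l c. lightlike_future l \<and> c > 0 \<and> D = ideal_view_of l c)"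

definition path_len :: "(real \<Rightarrow> real^4) \<Rightarrow> real" where
  "path_len \<gamma> = integral {0..1} (\<lambda>t. sqrt (mink (vector_derivative \<gamma> (at t within {0..1}))
                                           (vector_derivative \<gamma> (at t within {0..1}))))"

definition intrinsic_dist :: "(real^4) set \<Rightarrow> real^4 \<Rightarrow> real^4 \<Rightarrow> real" where
  "intrinsic_dist S p q = Inf {path_len \<gamma> | \<gamma>. C1_path_in S p q \<gamma>}"

definition isometric_ident :: "(complex \<Rightarrow> real^4) \<Rightarrow> (real^4) set \<Rightarrow> bool" where
  "isometric_ident \<iota> S \<longleftrightarrow> bij_betw \<iota> UNIV S \<and>
     (\<forall>z w. intrinsic_dist S (\<iota> z) (\<iota> w) = cmod (z - w))"

definition view_vec :: "((real^4) \<times> (real^4)) set \<Rightarrow> (complex \<Rightarrow> real^4) \<Rightarrow> complex \<Rightarrow> (real^4) \<times> (real^4)" where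
  "view_vec D \<iota> z = (THE u. u \<in> D \<and> fst u = \<iota> z)"

end

theory Submission
  imports Defs
begin

(*
  Pulled back along the global chart of H3, a closed one-form becomes a vector field F on R^3
  with continuous symmetric Jacobian, so the radial integral V x = integral over [0,1] of
  F (t x) . x is a potential for it, and W = V o chart_inv is a potential of w on H3.  Both
  terms of the cohomology fractal then telescope: Phi_T(v) = W (pi (phi_T v)) - W b.  Hence
  Phi_(R+d) (z_D) = W (pi (phi_R (phi_d z_D))) - W b = Phi_R (phi_d z_D) = Phi_R ((e^d z)_E).
  The vectors of an ideal view are unit tangent vectors, so the geodesic flow keeps their
  basepoints in H3.  The identity holds for every real R, and the isometric identifications
  enter only through the hypothesis relating phi_d z_D and (e^d z)_E.
*)

section \<open>Vector fields with symmetric derivative have potentials\<close>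

lemma symmetric_derivative_inner_commute:
  fixes A :: "real^'n \<Rightarrow> real^'n"
  assumes "linear A" and "\<And>i j. A (axis j 1) $ i = A (axis i 1) $ j"
  shows "A h \<bullet> x = A x \<bullet> h"
proof -
  have "transpose (matrix A) = matrix A"
    using assms(2) by (simp add: transpose_def matrix_def vec_eq_iff)
  then have "x v* matrix A = matrix A *v x"
    by (metis vector_transpose_matrix)
  then show ?thesis
    using dot_lmul_matrix[of x "matrix A" h] matrix_vector_mul(2)[OF assms(1)]
    by (metis inner_commute)
qed

definition radial_integrand_deriv ::
    "(real^'n \<Rightarrow> real^'n) \<Rightarrow> (real^'n \<Rightarrow> real^'n \<Rightarrow> real^'n) \<Rightarrow> real^'n \<Rightarrow> real \<Rightarrow> (real^'n) \<Rightarrow>\<^sub>L real" where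
  "radial_integrand_deriv F D x t = Blinfun (\<lambda>h. D (t *\<^sub>R x) (t *\<^sub>R h) \<bullet> x + F (t *\<^sub>R x) \<bullet> h)"

lemma radial_integrand_deriv_apply:
  assumes "\<And>y. bounded_linear (D y)"
  shows "radial_integrand_deriv F D x t h = D (t *\<^sub>R x) (t *\<^sub>R h) \<bullet> x + F (t *\<^sub>R x) \<bullet> h"
proof -
  have "bounded_linear (\<lambda>h. D (t *\<^sub>R x) (t *\<^sub>R h) \<bullet> x + F (t *\<^sub>R x) \<bullet> h)"
    by (intro bounded_linear_add bounded_linear_inner_left_comp bounded_linear_inner_right
        bounded_linear_compose[OF assms] bounded_linear_scaleR_right)
  then show ?thesis
    by (simp add: radial_integrand_deriv_def bounded_linear_Blinfun_apply)
qed

lemma has_derivative_radial_integrand: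
  assumes "\<And>x. (F has_derivative D x) (at x)"
  shows "((\<lambda>x. F (t *\<^sub>R x) \<bullet> x) has_derivative radial_integrand_deriv F D x t) (at x within S)"
proof -
  have blD: "bounded_linear (D y)" for y
    using assms has_derivative_bounded_linear by blast
  have "((\<lambda>x. F (t *\<^sub>R x)) has_derivative (\<lambda>h. D (t *\<^sub>R x) (t *\<^sub>R h))) (at x within S)"
    by (rule has_derivative_compose[OF _ assms]) (intro derivative_intros)
  from has_derivative_inner[OF this has_derivative_ident] show ?thesis
    by (rule has_derivative_eq_rhs) (auto simp: radial_integrand_deriv_apply[OF blD] inner_commute)
qed

lemma continuous_on_radial_integrand_deriv:
  fixes F :: "real^'n \<Rightarrow> real^'n" and D :: "real^'n \<Rightarrow> real^'n \<Rightarrow> real^'n"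
  assumes dF: "\<And>x. (F has_derivative D x) (at x)"
    and cont: "\<And>i j. continuous_on UNIV (\<lambda>x. D x (axis j 1) $ i)"
  shows "continuous_on (UNIV \<times> S) (\<lambda>(x, t). radial_integrand_deriv F D x t)"
proof (rule continuous_on_blinfun_componentwise)
  have blD: "bounded_linear (D y)" for y
    using dF has_derivative_bounded_linear by blast
  have contF: "continuous_on UNIV F"
    using dF has_derivative_continuous continuous_at_imp_continuous_on by blast
  have contD: "continuous_on UNIV (\<lambda>x. D x (axis j 1))" for j
    using continuous_on_vec_lambda[of UNIV "\<lambda>i x. D x (axis j 1) $ i", OF cont] by simp
  fix i :: "real^'n" assume "i \<in> Basis"
  then obtain j where i: "i = axis j 1" by (auto simp: Basis_vec_def)
  have component: "(\<lambda>xt. blinfun_apply ((\<lambda>(x, t). radial_integrand_deriv F D x t) xt) i) =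
     (\<lambda>xt. snd xt * (D (snd xt *\<^sub>R fst xt) (axis j 1) \<bullet> fst xt) + F (snd xt *\<^sub>R fst xt) \<bullet> axis j 1)"
    using blD by (auto simp: radial_integrand_deriv_apply i linear_scale bounded_linear.linear)
  show "continuous_on (UNIV \<times> S) (\<lambda>xt. blinfun_apply ((\<lambda>(x, t). radial_integrand_deriv F D x t) xt) i)"
    unfolding component
    by (intro continuous_intros continuous_on_compose2[OF contD] continuous_on_compose2[OF contF]) auto
qed

lemma integral_radial_integrand_deriv:
  fixes F :: "real^'n \<Rightarrow> real^'n" and D :: "real^'n \<Rightarrow> real^'n \<Rightarrow> real^'n"
  assumes dF: "\<And>x. (F has_derivative D x) (at x)"
    and sym: "\<And>x i j. D x (axis j 1) $ i = D x (axis i 1) $ j"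
  shows "((\<lambda>t. radial_integrand_deriv F D x t h) has_integral F x \<bullet> h) {0..1}"
proof -
  have blD: "bounded_linear (D y)" for y
    using dF has_derivative_bounded_linear by blast
  then have linD: "linear (D y)" for y
    by (rule bounded_linear.linear)
  define G where "G t = t * (F (t *\<^sub>R x) \<bullet> h)" for t
  have "(G has_vector_derivative radial_integrand_deriv F D x t h) (at t within {0..1})" for t
  proof -
    have dFt: "((\<lambda>t. F (t *\<^sub>R x)) has_derivative (\<lambda>s. D (t *\<^sub>R x) (s *\<^sub>R x))) (at t within {0..1})"
      by (rule has_derivative_compose[OF _ dF]) (intro derivative_intros)
    have "(G has_derivative (\<lambda>s. t * (D (t *\<^sub>R x) (s *\<^sub>R x) \<bullet> h) + s * (F (t *\<^sub>R x) \<bullet> h))) (at t within {0..1})"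
      unfolding G_def by (rule has_derivative_eq_rhs, (rule derivative_intros dFt)+) auto
    moreover have "D (t *\<^sub>R x) x \<bullet> h = D (t *\<^sub>R x) h \<bullet> x"
      by (rule symmetric_derivative_inner_commute[OF linD sym])
    ultimately show ?thesis
      by (simp add: has_vector_derivative_def radial_integrand_deriv_apply[OF blD] linear_scale[OF linD]
          algebra_simps)
  qed
  then have "((\<lambda>t. radial_integrand_deriv F D x t h) has_integral G 1 - G 0) {0..1}"
    by (intro fundamental_theorem_of_calculus) auto
  then show ?thesis by (simp add: G_def)
qed

lemma exists_potential_of_symmetric_derivative:
  fixes F :: "real^'n \<Rightarrow> real^'n" and D :: "real^'n \<Rightarrow> real^'n \<Rightarrow> real^'n"
  assumes dF: "\<And>x. (F has_derivative D x) (at x)"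
    and cont: "\<And>i j. continuous_on UNIV (\<lambda>x. D x (axis j 1) $ i)"
    and sym: "\<And>x i j. D x (axis j 1) $ i = D x (axis i 1) $ j"
  shows "\<exists>V. \<forall>x. (V has_derivative (\<lambda>h. F x \<bullet> h)) (at x)"
proof -
  define V where "V x = integral (cbox 0 1) (\<lambda>t. F (t *\<^sub>R x) \<bullet> x)" for x
  have "(V has_derivative (\<lambda>h. F x \<bullet> h)) (at x)" for x
  proof -
    have contF: "continuous_on UNIV F"
      using dF has_derivative_continuous continuous_at_imp_continuous_on by blast
    have "(\<lambda>t. F (t *\<^sub>R y) \<bullet> y) integrable_on cbox 0 1" for y
      unfolding cbox_interval
      by (intro integrable_continuous_interval continuous_intros continuous_on_compose2[OF contF]) auto
    then have leibniz: "(V has_derivative integral (cbox 0 1) (radial_integrand_deriv F D x)) (at x)"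
      unfolding V_def
      by (intro leibniz_rule has_derivative_radial_integrand continuous_on_radial_integrand_deriv dF cont) auto
    have "continuous_on (cbox 0 1) (radial_integrand_deriv F D x)"
      by (rule continuous_on_compose2[OF continuous_on_radial_integrand_deriv[OF dF cont],
            of _ "\<lambda>t. (x, t)", simplified]) (auto intro: continuous_intros)
    then have "radial_integrand_deriv F D x integrable_on cbox 0 1"
      by (rule integrable_continuous)
    then have "blinfun_apply (integral (cbox 0 1) (radial_integrand_deriv F D x)) = (\<lambda>h. F x \<bullet> h)"
      using integral_radial_integrand_deriv[OF dF sym, of x]
      by (simp add: blinfun_apply_integral integral_unique fun_eq_iff)
    with leibniz show ?thesis by simp
  qed
  then show ?thesis by blast
qed

section \<open>The global chart of H3\<close>

lemma vector_4 [simp]: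
  "(vector [a, b, c, d] :: 'a::zero^4) $ 1 = a"
  "(vector [a, b, c, d] :: 'a::zero^4) $ 2 = b"
  "(vector [a, b, c, d] :: 'a::zero^4) $ 3 = c"
  "(vector [a, b, c, d] :: 'a::zero^4) $ 4 = d"
  by (simp_all add: vector_def)

lemma vector_4_eq_sum_axis:
  "(vector [a, b, c, d] :: real^4) = a *\<^sub>R axis 1 1 + b *\<^sub>R axis 2 1 + c *\<^sub>R axis 3 1 + d *\<^sub>R axis 4 1"
  by (simp add: vec_eq_iff forall_4 axis_def)

lemma norm_square_vec3: "(norm (x::real^3))\<^sup>2 = (x$1)\<^sup>2 + (x$2)\<^sup>2 + (x$3)\<^sup>2"
  unfolding power2_norm_eq_inner by (simp add: inner_vec_def sum_3 power2_eq_square)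

definition chart_inv :: "real^4 \<Rightarrow> real^3" where
  "chart_inv p = vector [p$2, p$3, p$4]"

lemma chart_in_H3: "chart x \<in> H3"
proof -
  have "(sqrt (1 + (norm x)\<^sup>2))\<^sup>2 = 1 + (x$1)\<^sup>2 + (x$2)\<^sup>2 + (x$3)\<^sup>2"
    by (simp add: norm_square_vec3 add_nonneg_nonneg)
  then show ?thesis
    by (simp add: H3_def mink_def chart_def power2_eq_square add_pos_nonneg)
qed

lemma chart_inv_chart [simp]: "chart_inv (chart x) = x"
  by (simp add: chart_inv_def chart_def vec_eq_iff forall_3)

lemma chart_chart_inv:
  assumes "p \<in> H3" shows "chart (chart_inv p) = p"
proof -
  have "1 + (norm (chart_inv p))\<^sup>2 = (p$1)\<^sup>2" and "p$1 > 0"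
    using assms unfolding norm_square_vec3
    by (auto simp: H3_def mink_def chart_inv_def power2_eq_square)
  then have "sqrt (1 + (norm (chart_inv p))\<^sup>2) = p$1"
    by simp
  then show ?thesis
    by (simp add: chart_def chart_inv_def vec_eq_iff forall_4)
qed

lemma bounded_linear_chart_inv: "bounded_linear chart_inv"
  unfolding linear_conv_bounded_linear[symmetric]
  by (rule linearI) (simp_all add: chart_inv_def vec_eq_iff forall_3)

definition chart_deriv :: "real^3 \<Rightarrow> real^3 \<Rightarrow> real^4" where
  "chart_deriv x h = vector [(x \<bullet> h) / sqrt (1 + (norm x)\<^sup>2), h$1, h$2, h$3]"

lemma has_derivative_chart: "(chart has_derivative chart_deriv x) (at x within S)"
proof -
  have "((\<lambda>x. 1 + x \<bullet> x) has_derivative (\<lambda>h. 2 * (x \<bullet> h))) (at x within S)"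
    by (rule has_derivative_eq_rhs, (rule derivative_intros)+) (auto simp: inner_commute)
  then have "((\<lambda>x. 1 + (norm x)\<^sup>2) has_derivative (\<lambda>h. 2 * (x \<bullet> h))) (at x within S)"
    by (simp only: power2_norm_eq_inner)
  from has_derivative_real_sqrt[OF _ this]
  have sqrt: "((\<lambda>x. sqrt (1 + (norm x)\<^sup>2)) has_derivative (\<lambda>h. (x \<bullet> h) / sqrt (1 + (norm x)\<^sup>2)))
      (at x within S)"
    by (rule has_derivative_eq_rhs) (auto simp: add_pos_nonneg divide_simps)
  have nth: "((\<lambda>x. x $ i) has_derivative (\<lambda>h. h $ i)) (at x within S)" for i
    by (rule bounded_linear.has_derivative[OF bounded_linear_vec_nth has_derivative_ident])
  show ?thesis
    unfolding chart_def[abs_def] chart_deriv_def vector_4_eq_sum_axis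
    by (intro derivative_intros sqrt nth)
qed

lemma linear_chart_deriv: "linear (chart_deriv x)"
  using has_derivative_chart has_derivative_linear by blast

lemma frechet_derivative_chart: "frechet_derivative chart (at x) = chart_deriv x"
  using has_derivative_chart frechet_derivative_at by metis

lemma linear_real_eq_sum_axis:
  fixes f :: "real^'n \<Rightarrow> real"
  assumes "linear f"
  shows "f h = (\<Sum>i\<in>UNIV. h$i * f (axis i 1))"
proof -
  have "f h = f (\<Sum>i\<in>UNIV. h$i *\<^sub>R axis i 1)"
    using basis_expansion[of h] by (simp add: scalar_mult_eq_scaleR)
  then show ?thesis
    using assms by (simp add: linear_sum linear_scale)
qed

lemma pullback_coeffs_inner:
  assumes "linear (w (chart x))"
  shows "pullback_coeffs w x \<bullet> h = w (chart x) (chart_deriv x h)"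
proof -
  have "linear (\<lambda>h. w (chart x) (chart_deriv x h))"
    using linear_compose[OF linear_chart_deriv assms] by (simp add: o_def)
  then have "w (chart x) (chart_deriv x h) = (\<Sum>i\<in>UNIV. h$i * w (chart x) (chart_deriv x (axis i 1)))"
    by (rule linear_real_eq_sum_axis)
  also have "\<dots> = pullback_coeffs w x \<bullet> h"
    unfolding pullback_coeffs_def frechet_derivative_chart inner_vec_def
    by (simp add: mult.commute)
  finally show ?thesis by simp
qed

section \<open>Closed one-forms on H3 are exact\<close>

definition chart_potential :: "(real^4 \<Rightarrow> real^4 \<Rightarrow> real) \<Rightarrow> (real^3 \<Rightarrow> real) \<Rightarrow> bool" where
  "chart_potential w V \<longleftrightarrow> (\<forall>x. (V has_derivative (\<lambda>h. pullback_coeffs w x \<bullet> h)) (at x))"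

lemma closed_one_form_chart_potential:
  assumes "closed_one_form w"
  obtains V where "chart_potential w V"
proof -
  obtain D where "\<And>x. (pullback_coeffs w has_derivative D x) (at x)"
    and "\<And>i j. continuous_on UNIV (\<lambda>x. D x (axis j 1) $ i)"
    and "\<And>x i j. D x (axis j 1) $ i = D x (axis i 1) $ j"
    using assms unfolding closed_one_form_def by blast
  from exists_potential_of_symmetric_derivative[OF this] show ?thesis
    using that unfolding chart_potential_def by blast
qed

lemma has_vector_derivative_chart_potential:
  assumes lin: "\<forall>p\<in>H3. linear (w p)" and V: "chart_potential w V"
    and nontriv: "at t within S \<noteq> bot" and t: "t \<in> S" and \<gamma>: "\<forall>s\<in>S. \<gamma> s \<in> H3"
    and d\<gamma>: "(\<gamma> has_vector_derivative \<gamma>') (at t within S)"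
  shows "((\<lambda>s. V (chart_inv (\<gamma> s))) has_vector_derivative w (\<gamma> t) \<gamma>') (at t within S)"
proof -
  have d\<beta>: "((\<lambda>s. chart_inv (\<gamma> s)) has_vector_derivative chart_inv \<gamma>') (at t within S)"
    using bounded_linear.has_vector_derivative[OF bounded_linear_chart_inv d\<gamma>] .
  have "((\<lambda>s. chart (chart_inv (\<gamma> s))) has_vector_derivative chart_deriv (chart_inv (\<gamma> t)) (chart_inv \<gamma>'))
      (at t within S)"
    using has_derivative_compose[OF d\<beta>[unfolded has_vector_derivative_def] has_derivative_chart]
    by (simp add: has_vector_derivative_def linear_scale[OF linear_chart_deriv])
  \<comment> \<open>On H3 the curve equals chart of its chart_inv-projection, which identifies its velocity\<close>
  then have "(\<gamma> has_vector_derivative chart_deriv (chart_inv (\<gamma> t)) (chart_inv \<gamma>')) (at t within S)"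
    by (rule has_vector_derivative_transform[OF t, rotated]) (use \<gamma> chart_chart_inv in auto)
  then have \<gamma>': "\<gamma>' = chart_deriv (chart_inv (\<gamma> t)) (chart_inv \<gamma>')"
    using vector_derivative_unique_within[OF nontriv d\<gamma>] by blast
  have "((\<lambda>s. V (chart_inv (\<gamma> s))) has_vector_derivative pullback_coeffs w (chart_inv (\<gamma> t)) \<bullet> chart_inv \<gamma>')
      (at t within S)"
    using has_derivative_compose[OF d\<beta>[unfolded has_vector_derivative_def] V[unfolded chart_potential_def, rule_format]]
    by (simp add: has_vector_derivative_def algebra_simps)
  moreover have "pullback_coeffs w (chart_inv (\<gamma> t)) \<bullet> chart_inv \<gamma>' = w (\<gamma> t) \<gamma>'"
    using pullback_coeffs_inner lin \<gamma> t \<gamma>' chart_chart_inv by metis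
  ultimately show ?thesis by simp
qed

lemma at_within_Icc_nontrivial: "t \<in> {a..b::real} \<Longrightarrow> a < b \<Longrightarrow> at t within {a..b} \<noteq> bot"
  by (simp add: trivial_limit_within islimpt_Icc)

lemma line_int_chart_potential:
  assumes lin: "\<forall>p\<in>H3. linear (w p)" and V: "chart_potential w V"
    and \<gamma>: "C1_path_in H3 p q \<gamma>"
  shows "line_int w \<gamma> = V (chart_inv q) - V (chart_inv p)"
proof -
  obtain \<gamma>' where d\<gamma>: "\<And>t. t \<in> {0..1} \<Longrightarrow> (\<gamma> has_vector_derivative \<gamma>' t) (at t)"
    using \<gamma> unfolding C1_path_in_def C1_differentiable_on_def by blast
  have H: "\<forall>s\<in>{0..1}. \<gamma> s \<in> H3" and ends: "\<gamma> 0 = p" "\<gamma> 1 = q"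
    using \<gamma> unfolding C1_path_in_def by auto
  have "((\<lambda>t. w (\<gamma> t) (\<gamma>' t)) has_integral V (chart_inv (\<gamma> 1)) - V (chart_inv (\<gamma> 0))) {0..1}"
  proof (rule fundamental_theorem_of_calculus)
    fix t :: real assume t: "t \<in> {0..1}"
    show "((\<lambda>s. V (chart_inv (\<gamma> s))) has_vector_derivative w (\<gamma> t) (\<gamma>' t)) (at t within {0..1})"
      using has_vector_derivative_at_within[OF d\<gamma>[OF t]] at_within_Icc_nontrivial[OF t] t H
      by (intro has_vector_derivative_chart_potential[OF lin V]) auto
  qed simp
  then have "integral {0..1} (\<lambda>t. w (\<gamma> t) (\<gamma>' t)) = V (chart_inv q) - V (chart_inv p)"
    unfolding ends by (rule integral_unique)
  moreover have "vector_derivative \<gamma> (at t within {0..1}) = \<gamma>' t" if "t \<in> {0..1}" for t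
    using vector_derivative_at_within_ivl[OF d\<gamma>[OF that]] that by auto
  then have "line_int w \<gamma> = integral {0..1} (\<lambda>t. w (\<gamma> t) (\<gamma>' t))"
    unfolding line_int_def by (intro integral_cong) simp
  ultimately show ?thesis by simp
qed

lemma C1_path_in_H3_exists:
  assumes "p \<in> H3" "q \<in> H3"
  obtains \<gamma> where "C1_path_in H3 p q \<gamma>"
proof
  define \<beta> where "\<beta> t = chart_inv p + t *\<^sub>R (chart_inv q - chart_inv p)" for t :: real
  have "(\<beta> has_derivative (\<lambda>s. s *\<^sub>R (chart_inv q - chart_inv p))) (at t)" for t
    unfolding \<beta>_def by (rule has_derivative_eq_rhs, (rule derivative_intros)+) auto
  from has_derivative_compose[OF this has_derivative_chart]
  have "((chart \<circ> \<beta>) has_vector_derivative chart_deriv (\<beta> t) (chart_inv q - chart_inv p)) (at t)" for t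
    by (simp add: has_vector_derivative_def linear_scale[OF linear_chart_deriv] o_def)
  moreover have "continuous_on {0..1} (\<lambda>t. chart_deriv (\<beta> t) (chart_inv q - chart_inv p))"
    unfolding \<beta>_def chart_deriv_def vector_4_eq_sum_axis
    by (intro continuous_intros) (auto simp: add_nonneg_eq_0_iff)
  ultimately have "(chart \<circ> \<beta>) C1_differentiable_on {0..1}"
    unfolding C1_differentiable_on_def by (intro exI[of _ "\<lambda>t. chart_deriv (\<beta> t) (chart_inv q - chart_inv p)"]) blast
  then show "C1_path_in H3 p q (chart \<circ> \<beta>)"
    using assms chart_in_H3 chart_chart_inv by (auto simp: C1_path_in_def \<beta>_def)
qed

lemma int_from_chart_potential:
  assumes lin: "\<forall>p\<in>H3. linear (w p)" and V: "chart_potential w V"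
    and "b \<in> H3" "q \<in> H3"
  shows "int_from w b q = V (chart_inv q) - V (chart_inv b)"
proof -
  obtain \<gamma> where "C1_path_in H3 b q \<gamma>"
    using C1_path_in_H3_exists[OF assms(3,4)] .
  then have "C1_path_in H3 b q (SOME \<gamma>. C1_path_in H3 b q \<gamma>)"
    by (rule someI[where P = "C1_path_in H3 b q"])
  then show ?thesis
    unfolding int_from_def by (rule line_int_chart_potential[OF lin V])
qed

section \<open>The geodesic flow\<close>

lemma mink_add_left: "mink (x + y) z = mink x z + mink y z"
  and mink_add_right: "mink z (x + y) = mink z x + mink z y"
  and mink_scaleR_left: "mink (a *\<^sub>R x) z = a * mink x z"
  and mink_scaleR_right: "mink z (a *\<^sub>R x) = a * mink z x"
  and mink_diff_left: "mink (x - y) z = mink x z - mink y z"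
  and mink_diff_right: "mink z (x - y) = mink z x - mink z y"
  and mink_commute: "mink x z = mink z x"
  by (simp_all add: mink_def algebra_simps)

lemmas mink_simps = mink_add_left mink_add_right mink_diff_left mink_diff_right
  mink_scaleR_left mink_scaleR_right

lemma fst_UT_in_H3: "u \<in> UT \<Longrightarrow> fst u \<in> H3"
  by (cases u) (simp add: UT_def)

lemma abs_time_component_less:
  assumes "p \<in> H3" "mink p v = 0" "mink v v = 1"
  shows "\<bar>v$1\<bar> < p$1"
proof -
  define A where "A = p$2 * p$2 + p$3 * p$3 + p$4 * p$4"
  define B where "B = v$2 * v$2 + v$3 * v$3 + v$4 * v$4"
  define C where "C = p$2 * v$2 + p$3 * v$3 + p$4 * v$4"
  have A: "A = p$1 * p$1 - 1" and B: "B = v$1 * v$1 + 1" and C: "C = p$1 * v$1" and "p$1 > 0"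
    using assms by (auto simp: H3_def mink_def A_def B_def C_def)
  \<comment> \<open>Lagrange's identity for the spatial parts: reverse Cauchy-Schwarz in R^(1,3)\<close>
  have "A * B - C * C = (p$2 * v$3 - p$3 * v$2)\<^sup>2 + (p$2 * v$4 - p$4 * v$2)\<^sup>2 + (p$3 * v$4 - p$4 * v$3)\<^sup>2"
    unfolding A_def B_def C_def by (simp add: power2_eq_square algebra_simps)
  then have "C * C \<le> A * B"
    by (smt (verit) zero_le_power2)
  then have "(v$1)\<^sup>2 < (p$1)\<^sup>2"
    unfolding A B C by (simp add: power2_eq_square algebra_simps)
  with \<open>p$1 > 0\<close> show ?thesis
    by (metis abs_of_pos power2_abs power_less_imp_less_base less_le)
qed

lemma abs_sinh_less_cosh: "\<bar>sinh t\<bar> < cosh (t::real)"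
  using sinh_less_cosh_real[of t] sinh_less_cosh_real[of "-t"] by (simp add: abs_less_iff)

lemma gflow_in_UT:
  assumes "u \<in> UT" shows "gflow t u \<in> UT"
proof -
  obtain p v where u: "u = (p, v)" and "p \<in> H3" and pv: "mink p v = 0" and vv: "mink v v = 1"
    using assms by (auto simp: UT_def)
  then have pp: "mink p p = -1" and vp: "mink v p = 0"
    by (auto simp: H3_def mink_commute)
  have "\<bar>sinh t * v$1\<bar> \<le> \<bar>sinh t\<bar> * p$1"
    using abs_time_component_less[OF \<open>p \<in> H3\<close> pv vv] by (simp add: abs_mult mult_left_mono)
  also have "\<dots> < cosh t * p$1"
    using abs_sinh_less_cosh \<open>p \<in> H3\<close> by (simp add: H3_def)
  finally have "(cosh t *\<^sub>R p + sinh t *\<^sub>R v) $ 1 > 0"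
    by simp
  moreover have "(cosh t)\<^sup>2 = (sinh t)\<^sup>2 + 1"
    by (rule cosh_square_eq)
  ultimately show ?thesis
    using pp pv vp vv
    by (simp add: u UT_def H3_def gflow_def mink_simps power2_eq_square algebra_simps)
qed

lemma gflow_zero [simp]: "gflow 0 u = u"
  by (simp add: gflow_def)

lemma gflow_add: "gflow s (gflow t u) = gflow (s + t) u"
  by (simp add: gflow_def cosh_add sinh_add algebra_simps)

lemma has_vector_derivative_gflow:
  "((\<lambda>t. fst (gflow t u)) has_vector_derivative snd (gflow t u)) (at t)"
  unfolding gflow_def by (auto intro!: derivative_eq_intros)

section \<open>The cohomology fractal along the flow\<close>

lemma sint_fundamental_theorem:
  assumes "\<And>t. (f has_vector_derivative f' t) (at t)"
  shows "sint f' T = f T - f 0"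
proof (cases "0 \<le> T")
  case True
  have "(f' has_integral f T - f 0) {0..T}"
    using True by (intro fundamental_theorem_of_calculus has_vector_derivative_at_within[OF assms])
  with True show ?thesis by (simp add: sint_def integral_unique)
next
  case False
  have "(f' has_integral f 0 - f T) {T..0}"
    using False by (intro fundamental_theorem_of_calculus has_vector_derivative_at_within[OF assms]) auto
  with False show ?thesis by (simp add: sint_def integral_unique)
qed

lemma Phi_chart_potential:
  assumes lin: "\<forall>p\<in>H3. linear (w p)" and V: "chart_potential w V"
    and "b \<in> H3" and u: "u \<in> UT"
  shows "Phi w b T u = V (chart_inv (fst (gflow T u))) - V (chart_inv b)"
proof -
  have H: "\<forall>s\<in>UNIV. fst (gflow s u) \<in> H3"
    using gflow_in_UT[OF u] fst_UT_in_H3 by blast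
  have "((\<lambda>s. V (chart_inv (fst (gflow s u)))) has_vector_derivative w (fst (gflow t u)) (snd (gflow t u)))
      (at t)" for t
    using has_vector_derivative_chart_potential[OF lin V _ _ H has_vector_derivative_gflow] by simp
  then have "sint (\<lambda>t. w (fst (gflow t u)) (snd (gflow t u))) T
      = V (chart_inv (fst (gflow T u))) - V (chart_inv (fst u))"
    using sint_fundamental_theorem[of "\<lambda>s. V (chart_inv (fst (gflow s u)))"] by simp
  moreover have "int_from w b (fst u) = V (chart_inv (fst u)) - V (chart_inv b)"
    using int_from_chart_potential[OF lin V \<open>b \<in> H3\<close> fst_UT_in_H3[OF u]] .
  ultimately show ?thesis
    by (simp add: Phi_def)
qed

lemma Phi_gflow:
  assumes "closed_one_form w" "b \<in> H3" "u \<in> UT"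
  shows "Phi w b (s + t) u = Phi w b s (gflow t u)"
proof -
  have lin: "\<forall>p\<in>H3. linear (w p)"
    using assms(1) by (simp add: closed_one_form_def)
  obtain V where V: "chart_potential w V"
    using closed_one_form_chart_potential[OF assms(1)] .
  show ?thesis
    using Phi_chart_potential[OF lin V assms(2)] assms(3) gflow_in_UT gflow_add by simp
qed

section \<open>Ideal views\<close>

lemma view_vec_in_view:
  assumes "inj_on fst D" and "\<iota> z \<in> fst ` D"
  shows "view_vec D \<iota> z \<in> D"
proof -
  obtain u where "u \<in> D" and "fst u = \<iota> z"
    using assms(2) by force
  with assms(1) have "view_vec D \<iota> z = u"
    unfolding view_vec_def by (intro the_equality) (simp, metis inj_on_eq_iff)
  with \<open>u \<in> D\<close> show ?thesis by simp
qed

lemma out_normal_in_UT: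
  assumes "lightlike_future l" "c > 0" "p \<in> horosphere l c"
  shows "(p, out_normal l p) \<in> UT"
proof -
  have "p \<in> H3" and "mink p p = -1" and "mink p l = - c" and "mink l p = - c"
    using assms(3) by (auto simp: horosphere_def H3_def mink_commute)
  moreover have "mink l l = 0"
    using assms(1) by (simp add: lightlike_future_def)
  ultimately show ?thesis
    using assms(2) by (simp add: UT_def out_normal_def mink_simps)
qed

lemma ideal_view_subset_UT: "ideal_view D \<Longrightarrow> D \<subseteq> UT"
  by (auto simp: ideal_view_def ideal_view_of_def intro: out_normal_in_UT)

lemma inj_on_fst_ideal_view: "ideal_view D \<Longrightarrow> inj_on fst D"
  by (auto simp: ideal_view_def ideal_view_of_def inj_on_def)

lemma view_vec_ideal_view_in_UT:
  assumes "ideal_view D" and "isometric_ident \<iota> (fst ` D)"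
  shows "view_vec D \<iota> z \<in> UT"
proof -
  have "\<iota> z \<in> fst ` D"
    using assms(2) by (auto simp: isometric_ident_def bij_betw_def)
  with assms(1) show ?thesis
    using view_vec_in_view inj_on_fst_ideal_view ideal_view_subset_UT by blast
qed

theorem lemma9p3:
  fixes w :: "real^4 \<Rightarrow> real^4 \<Rightarrow> real" and b :: "real^4"
    and D E :: "((real^4) \<times> (real^4)) set"
    and \<iota>D \<iota>E :: "complex \<Rightarrow> real^4" and d :: real
  assumes "closed_one_form w"
    and "b \<in> H3"
    and "ideal_view D"
    and "isometric_ident \<iota>D (fst ` D)"
    and "E = gflow d ` D"
    and "isometric_ident \<iota>E (fst ` E)"
    and "\<forall>z. gflow d (view_vec D \<iota>D z) = view_vec E \<iota>E (complex_of_real (exp d) * z)"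
  shows "\<forall>R>0. \<forall>z. Phi w b (R + d) (view_vec D \<iota>D z)
                  = Phi w b R (view_vec E \<iota>E (complex_of_real (exp d) * z))"
proof (intro allI impI)
  fix R :: real and z :: complex
  have "view_vec D \<iota>D z \<in> UT"
    using view_vec_ideal_view_in_UT[OF assms(3,4)] .
  from Phi_gflow[OF assms(1,2) this, of R d] assms(7)
  show "Phi w b (R + d) (view_vec D \<iota>D z) = Phi w b R (view_vec E \<iota>E (complex_of_real (exp d) * z))"
    by simp
qed

end
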